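(* There exists a positive integer $d_0$ such that the following holds for all $d \geq d_0$. Let $n$ be a positive even integer, and let $H = (X \cup Y, E)$ be a balanced bipartite graph on $[n]$ with parts $X,Y$ satisfying $\frac{d}{2}-d^{2/3}\leq\deg_H(v) \leq \frac{d}{2} + d^{2/3}$ for every $v \in [n]$. Let $G_X$ be a graph on $X$ with maximum degree at most $\Delta$, where $1 \leq \Delta \leq d$. Then there exist $k := \lceil \log_2 \Delta \rceil + 8$ bipartitions $\{X'_1, X''_1\}, \ldots, \{X'_k, X''_k\}$ of $X$ such that: (M1) for every edge $e \in E(G_X)$ there is at least one index $j \in [k]$ such that $e$ has one endpoint in $X'_j$ and the other in $X''_j$; (M2) for each $1 \leq j \leq k$, $\{X'_j, X''_j\}$ is $\frac{d}{5}$-good with respect to $H$.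
   Context: A balanced bipartite graph $H=(X\cup Y,E)$ is a bipartite graph with parts $X,Y$, $|X|=|Y|$. Definition ($d$-good bipartition): let $H=(X\cup Y,E)$ be a balanced bipartite graph on $[n]$ and $d>0$. A bipartition $\{X',X''\}$ of $X$ is $d$-good with respect to $H$ if (G1) $\big||X'|-|X''|\big|\leq 1$, and (G2) $|N_H(y)\cap X'|\geq d$ and $|N_H(y)\cap X''|\geq d$ for every $y\in Y$. *)

theory Defs
  imports Complex_Main
begin

definition nbhd :: "(nat \<Rightarrow> nat \<Rightarrow> bool) \<Rightarrow> nat \<Rightarrow> nat set" where
  "nbhd E v = {u. E v u}"

definition simple_graph_on :: "nat set \<Rightarrow> (nat \<Rightarrow> nat \<Rightarrow> bool) \<Rightarrow> bool" where
  "simple_graph_on V E \<longleftrightarrow>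
     (\<forall>u v. E u v \<longrightarrow> E v u) \<and> (\<forall>u. \<not> E u u) \<and>
     (\<forall>u v. E u v \<longrightarrow> u \<in> V \<and> v \<in> V)"

definition balanced_bipartite :: "nat \<Rightarrow> nat set \<Rightarrow> nat set \<Rightarrow> (nat \<Rightarrow> nat \<Rightarrow> bool) \<Rightarrow> bool" where
  "balanced_bipartite n X Y E \<longleftrightarrow>
     simple_graph_on {1..n} E \<and> X \<union> Y = {1..n} \<and> X \<inter> Y = {} \<and> card X = card Y \<and>
     (\<forall>u v. E u v \<longrightarrow> (u \<in> X \<and> v \<in> Y) \<or> (u \<in> Y \<and> v \<in> X))"

definition bipartition_of :: "nat set \<Rightarrow> nat set \<Rightarrow> nat set \<Rightarrow> bool" where
  "bipartition_of X X1 X2 \<longleftrightarrow> X1 \<union> X2 = X \<and> X1 \<inter> X2 = {}"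

definition d_good :: "real \<Rightarrow> nat set \<Rightarrow> (nat \<Rightarrow> nat \<Rightarrow> bool) \<Rightarrow> nat set \<Rightarrow> nat set \<Rightarrow> bool" where
  "d_good d Y E X1 X2 \<longleftrightarrow>
     \<bar>int (card X1) - int (card X2)\<bar> \<le> 1 \<and>
     (\<forall>y\<in>Y. real (card (nbhd E y \<inter> X1)) \<ge> d \<and> real (card (nbhd E y \<inter> X2)) \<ge> d)"

end

theory Submission
  imports Defs
begin

text \<open>
  Number the vertices of \<open>X\<close> and group them into consecutive pairs; since \<open>G\<close> has maximum
  degree \<open>\<Delta>\<close>, the pairs can be coloured greedily with colours \<open>\<le> 2\<Delta> < 2^(k-1)\<close> so that
  pairs joined by an edge of \<open>G\<close> get distinct colours. A single set \<open>S\<close> of pairs then defines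
  all \<open>k\<close> bipartitions: in the \<open>j\<close>-th one the side of \<open>x\<close> is the parity of
  [pair of \<open>x\<close> in \<open>S\<close>] + [bit \<open>j - 1\<close> of its colour] + [position of \<open>x\<close> odd].
  The two vertices of a pair are always separated, which makes every bipartition balanced and
  separates the edges inside a pair. For an edge between differently coloured pairs, either the
  \<open>k\<close>-th bipartition (where bit \<open>k - 1\<close> of every colour is zero) separates it, or the bipartition at a bit
  where the two colours differ does.

  For \<open>S\<close> uniformly random, the number of neighbours of \<open>y \<in> Y\<close> on either side of a fixed
  bipartition is a sum over about \<open>d/2\<close> independent pairs, and an exponential moment bound
  makes it exponentially unlikely to drop below \<open>d/5\<close>. This bad event only depends on the
  pairs meeting \<open>N(y)\<close>, hence on at most \<open>4d\<^sup>3\<close> other bad events, and the symmetric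
  local lemma (proved here by counting subsets) gives an \<open>S\<close> avoiding all of them.
\<close>

section \<open>A counting form of the symmetric local lemma\<close>

lemma card_subsets_split:
  assumes "finite I" "D \<subseteq> I"
  shows "card {S. S \<subseteq> I \<and> P (S \<inter> D) \<and> Q (S - D)} =
         card {T. T \<subseteq> D \<and> P T} * card {U. U \<subseteq> I - D \<and> Q U}"
proof -
  have "bij_betw (\<lambda>S. (S \<inter> D, S - D)) {S. S \<subseteq> I \<and> P (S \<inter> D) \<and> Q (S - D)}
          ({T. T \<subseteq> D \<and> P T} \<times> {U. U \<subseteq> I - D \<and> Q U})"
  proof (rule bij_betw_byWitness[where f' = "\<lambda>(T, U). T \<union> U"])
    show "(\<lambda>(T, U). T \<union> U) ` ({T. T \<subseteq> D \<and> P T} \<times> {U. U \<subseteq> I - D \<and> Q U})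
            \<subseteq> {S. S \<subseteq> I \<and> P (S \<inter> D) \<and> Q (S - D)}"
    proof clarify
      fix T U assume "T \<subseteq> D" "P T" "U \<subseteq> I - D" "Q U"
      moreover have "(T \<union> U) \<inter> D = T" "T \<union> U - D = U" using calculation by auto
      ultimately show "T \<union> U \<subseteq> I \<and> P ((T \<union> U) \<inter> D) \<and> Q (T \<union> U - D)" using assms(2) by auto
    qed
  qed force+
  then show ?thesis by (simp add: bij_betw_same_card card_cartesian_product)
qed

lemma card_subsets_independent:
  assumes "finite I" "D \<subseteq> I"
    and P: "\<And>S. S \<subseteq> I \<Longrightarrow> P S \<longleftrightarrow> P (S \<inter> D)"
    and Q: "\<And>S. S \<subseteq> I \<Longrightarrow> Q S \<longleftrightarrow> Q (S - D)"
  shows "card {S. S \<subseteq> I \<and> P S \<and> Q S} * 2 ^ card I =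
         card {S. S \<subseteq> I \<and> P S} * card {S. S \<subseteq> I \<and> Q S}"
proof -
  have "finite D" using assms(1,2) finite_subset by blast
  have card_I: "card I = card D + card (I - D)"
    using card_Diff_subset[OF \<open>finite D\<close> assms(2)] card_mono[OF assms(1,2)] by simp
  have card_subsets: "card {T. T \<subseteq> B} = 2 ^ card B" if "finite B" for B :: "'a set"
    using that by (metis Pow_def card_Pow)
  let ?P = "card {T. T \<subseteq> D \<and> P T}" and ?Q = "card {U. U \<subseteq> I - D \<and> Q U}"
  have "{S. S \<subseteq> I \<and> P S \<and> Q S} = {S. S \<subseteq> I \<and> P (S \<inter> D) \<and> Q (S - D)}"
    using P Q by blast
  then have PQ: "card {S. S \<subseteq> I \<and> P S \<and> Q S} = ?P * ?Q"
    using card_subsets_split[OF assms(1,2)] by simp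
  have "{S. S \<subseteq> I \<and> P S} = {S. S \<subseteq> I \<and> P (S \<inter> D) \<and> True}"
    using P by blast
  then have P': "card {S. S \<subseteq> I \<and> P S} = ?P * 2 ^ card (I - D)"
    using card_subsets_split[OF assms(1,2), of P "\<lambda>_. True"] card_subsets[of "I - D"] assms(1) by simp
  have "{S. S \<subseteq> I \<and> Q S} = {S. S \<subseteq> I \<and> True \<and> Q (S - D)}"
    using Q by blast
  then have Q': "card {S. S \<subseteq> I \<and> Q S} = 2 ^ card D * ?Q"
    using card_subsets_split[OF assms(1,2), of "\<lambda>_. True" Q] card_subsets[OF \<open>finite D\<close>] by simp
  show ?thesis unfolding PQ P' Q' card_I by (simp add: power_add algebra_simps)
qed

text \<open>Probabilities refer to a uniformly random \<open>S \<subseteq> I\<close> and are written as counts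
  (\<open>card_A_le\<close> says that each event has probability at most \<open>p\<close>).\<close>

locale subset_local_lemma =
  fixes I :: "'i set" and Ev :: "'e set" and A :: "'e \<Rightarrow> 'i set \<Rightarrow> bool"
    and D :: "'e \<Rightarrow> 'i set" and p :: real and \<Delta> :: nat
  assumes finite_I: "finite I" and finite_Ev: "finite Ev"
    and D_subset: "e \<in> Ev \<Longrightarrow> D e \<subseteq> I"
    and A_determined: "e \<in> Ev \<Longrightarrow> S \<subseteq> I \<Longrightarrow> A e S \<longleftrightarrow> A e (S \<inter> D e)"
    and card_A_le: "e \<in> Ev \<Longrightarrow> real (card {S. S \<subseteq> I \<and> A e S}) \<le> p * 2 ^ card I"
    and card_dependent_le: "e \<in> Ev \<Longrightarrow> card {f \<in> Ev. D f \<inter> D e \<noteq> {}} \<le> \<Delta>"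
    and p_nonneg: "0 \<le> p" and p_less: "p < 1 / 2" and p_\<Delta>: "4 * p * \<Delta> \<le> 1"
begin

definition avoiding :: "'e set \<Rightarrow> 'i set set" where
  "avoiding T = {S. S \<subseteq> I \<and> (\<forall>f\<in>T. \<not> A f S)}"

lemma finite_avoiding [simp]: "finite (avoiding T)"
  unfolding avoiding_def using finite_I by simp

lemma card_avoiding_insert:
  "card (avoiding T) = card (avoiding (insert e T)) + card {S \<in> avoiding T. A e S}"
proof -
  have "avoiding (insert e T) \<inter> {S \<in> avoiding T. A e S} = {}"
    unfolding avoiding_def by auto
  then have "card (avoiding (insert e T) \<union> {S \<in> avoiding T. A e S}) =
             card (avoiding (insert e T)) + card {S \<in> avoiding T. A e S}"
    by (simp add: card_Un_disjoint)
  moreover have "avoiding (insert e T) \<union> {S \<in> avoiding T. A e S} = avoiding T"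
    unfolding avoiding_def by auto
  ultimately show ?thesis by simp
qed

lemma card_A_avoiding_independent_le:
  assumes e: "e \<in> Ev" and T: "T \<subseteq> Ev" and disjoint: "\<And>f. f \<in> T \<Longrightarrow> D f \<inter> D e = {}"
  shows "real (card {S \<in> avoiding T. A e S}) \<le> p * card (avoiding T)"
proof -
  have avoiding_T: "(\<forall>f\<in>T. \<not> A f S) \<longleftrightarrow> (\<forall>f\<in>T. \<not> A f (S - D e))" if "S \<subseteq> I" for S
  proof -
    have "A f S \<longleftrightarrow> A f (S - D e)" if "f \<in> T" for f
    proof -
      have "(S - D e) \<inter> D f = S \<inter> D f" using disjoint[OF that] by auto
      moreover have "f \<in> Ev" "S - D e \<subseteq> I" using T that \<open>S \<subseteq> I\<close> by auto
      ultimately show ?thesis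
        using A_determined[of f S] A_determined[of f "S - D e"] \<open>S \<subseteq> I\<close> by simp
    qed
    then show ?thesis by auto
  qed
  have "card {S. S \<subseteq> I \<and> A e S \<and> (\<forall>f\<in>T. \<not> A f S)} * 2 ^ card I =
        card {S. S \<subseteq> I \<and> A e S} * card (avoiding T)"
    unfolding avoiding_def
    by (rule card_subsets_independent[where P = "A e" and Q = "\<lambda>S. \<forall>f\<in>T. \<not> A f S",
          OF finite_I D_subset[OF e] A_determined[OF e] avoiding_T])
  moreover have "{S. S \<subseteq> I \<and> A e S \<and> (\<forall>f\<in>T. \<not> A f S)} = {S \<in> avoiding T. A e S}"
    unfolding avoiding_def by auto
  ultimately have "real (card {S \<in> avoiding T. A e S} * 2 ^ card I) =
                   real (card {S. S \<subseteq> I \<and> A e S} * card (avoiding T))"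
    by simp
  then have "real (card {S \<in> avoiding T. A e S}) * 2 ^ card I =
             real (card {S. S \<subseteq> I \<and> A e S}) * card (avoiding T)"
    by simp
  also have "\<dots> \<le> p * 2 ^ card I * card (avoiding T)"
    using card_A_le[OF e] by (simp add: mult_right_mono)
  finally show ?thesis by (simp add: mult.commute mult.left_commute)
qed

lemma card_avoiding_le_twice:
  assumes "T' \<subseteq> T" "finite T" and card_diff: "card (T - T') \<le> \<Delta>"
    and bound: "\<And>f. f \<in> T - T' \<Longrightarrow> real (card {S \<in> avoiding T'. A f S}) \<le> 2 * p * card (avoiding T')"
  shows "card (avoiding T') \<le> 2 * card (avoiding T)"
proof -
  have "avoiding T' \<subseteq> avoiding T \<union> (\<Union>f\<in>T - T'. {S \<in> avoiding T'. A f S})"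
    using assms(1) unfolding avoiding_def by auto
  then have "card (avoiding T') \<le> card (avoiding T \<union> (\<Union>f\<in>T - T'. {S \<in> avoiding T'. A f S}))"
    by (rule card_mono[rotated]) (use \<open>finite T\<close> in simp)
  also have "\<dots> \<le> card (avoiding T) + card (\<Union>f\<in>T - T'. {S \<in> avoiding T'. A f S})"
    by (rule card_Un_le)
  also have "\<dots> \<le> card (avoiding T) + (\<Sum>f\<in>T - T'. card {S \<in> avoiding T'. A f S})"
    using card_UN_le[of "T - T'"] \<open>finite T\<close> by simp
  finally have nat_bound: "card (avoiding T') \<le> card (avoiding T) + (\<Sum>f\<in>T - T'. card {S \<in> avoiding T'. A f S})" .
  have "real (card (avoiding T')) \<le> card (avoiding T) + (\<Sum>f\<in>T - T'. real (card {S \<in> avoiding T'. A f S}))"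
    using of_nat_mono[OF nat_bound, where 'a = real] by simp
  also have "(\<Sum>f\<in>T - T'. real (card {S \<in> avoiding T'. A f S})) \<le> (\<Sum>f\<in>T - T'. 2 * p * card (avoiding T'))"
    by (rule sum_mono) (rule bound)
  also have "\<dots> = card (T - T') * (2 * p * card (avoiding T'))"
    by simp
  also have "\<dots> \<le> \<Delta> * (2 * p * card (avoiding T'))"
    using card_diff p_nonneg by (intro mult_right_mono) auto
  also have "\<dots> \<le> card (avoiding T') / 2"
    using mult_right_mono[OF p_\<Delta>, of "real (card (avoiding T'))"] by (simp add: mult_ac)
  finally show ?thesis by linarith
qed

lemma card_A_avoiding_le:
  assumes e: "e \<in> Ev" and T: "T \<subseteq> Ev" "finite T"
    and IH: "\<And>f. f \<in> T \<Longrightarrow> D f \<inter> D e \<noteq> {} \<Longrightarrow>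
      real (card {S \<in> avoiding {f \<in> T. D f \<inter> D e = {}}. A f S})
        \<le> 2 * p * card (avoiding {f \<in> T. D f \<inter> D e = {}})"
  shows "real (card {S \<in> avoiding T. A e S}) \<le> 2 * p * card (avoiding T)"
proof -
  define T' where "T' = {f \<in> T. D f \<inter> D e = {}}"
  have "T' \<subseteq> T" unfolding T'_def by blast
  have "T - T' \<subseteq> {f \<in> Ev. D f \<inter> D e \<noteq> {}}" using T(1) unfolding T'_def by auto
  then have "card (T - T') \<le> card {f \<in> Ev. D f \<inter> D e \<noteq> {}}"
    using finite_Ev by (intro card_mono) auto
  then have "card (T - T') \<le> \<Delta>" using card_dependent_le[OF e] by linarith
  moreover have "real (card {S \<in> avoiding T'. A f S}) \<le> 2 * p * card (avoiding T')" if "f \<in> T - T'" for f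
    using IH that unfolding T'_def by blast
  ultimately have twice: "card (avoiding T') \<le> 2 * card (avoiding T)"
    using card_avoiding_le_twice[OF \<open>T' \<subseteq> T\<close> T(2)] by blast
  have "card {S \<in> avoiding T. A e S} \<le> card {S \<in> avoiding T'. A e S}"
    by (rule card_mono) (auto simp: avoiding_def T'_def finite_I)
  then have "real (card {S \<in> avoiding T. A e S}) \<le> card {S \<in> avoiding T'. A e S}" by simp
  also have "\<dots> \<le> p * card (avoiding T')"
    using e T(1) \<open>T' \<subseteq> T\<close> by (intro card_A_avoiding_independent_le) (auto simp: T'_def)
  also have "\<dots> \<le> p * (2 * card (avoiding T))"
    using twice p_nonneg by (intro mult_left_mono) auto
  finally show ?thesis by simp
qed

lemma avoiding_invariant:
  "T \<subseteq> Ev \<Longrightarrow> 0 < card (avoiding T) \<and>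
     (\<forall>e \<in> Ev - T. real (card {S \<in> avoiding T. A e S}) \<le> 2 * p * card (avoiding T))"
proof (induction "card T" arbitrary: T rule: less_induct)
  case less
  have "finite T" using less.prems finite_Ev finite_subset by blast
  have IH: "0 < card (avoiding T')"
    "\<And>e. e \<in> Ev - T' \<Longrightarrow> real (card {S \<in> avoiding T'. A e S}) \<le> 2 * p * card (avoiding T')"
    if "T' \<subset> T" for T'
  proof -
    have "card T' < card T" using psubset_card_mono[OF \<open>finite T\<close> that] .
    moreover have "T' \<subseteq> Ev" using that less.prems by blast
    ultimately have "0 < card (avoiding T') \<and>
      (\<forall>e \<in> Ev - T'. real (card {S \<in> avoiding T'. A e S}) \<le> 2 * p * card (avoiding T'))"
      by (rule less.hyps)
    then show "0 < card (avoiding T')"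
      "\<And>e. e \<in> Ev - T' \<Longrightarrow> real (card {S \<in> avoiding T'. A e S}) \<le> 2 * p * card (avoiding T')"
      by auto
  qed
  have nonempty: "0 < card (avoiding T)"
  proof (cases "T = {}")
    case True
    then have "{} \<in> avoiding T" unfolding avoiding_def by simp
    then show ?thesis using card_gt_0_iff finite_avoiding by blast
  next
    case False
    then obtain e where e: "e \<in> T" by blast
    then have "T - {e} \<subset> T" by blast
    note IH_e = IH[OF this]
    have "real (card {S \<in> avoiding (T - {e}). A e S}) \<le> 2 * p * card (avoiding (T - {e}))"
      using IH_e(2) e less.prems by blast
    moreover have "2 * p * card (avoiding (T - {e})) < card (avoiding (T - {e}))"
      using IH_e(1) p_less by simp
    moreover have "card (avoiding (T - {e})) = card (avoiding T) + card {S \<in> avoiding (T - {e}). A e S}"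
      using card_avoiding_insert[of "T - {e}" e] by (simp only: insert_Diff[OF e])
    ultimately show ?thesis by linarith
  qed
  have "real (card {S \<in> avoiding T. A e S}) \<le> 2 * p * card (avoiding T)" if e: "e \<in> Ev - T" for e
  proof (rule card_A_avoiding_le)
    fix f assume "f \<in> T" "D f \<inter> D e \<noteq> {}"
    then have "{f \<in> T. D f \<inter> D e = {}} \<subset> T" "f \<in> Ev - {f \<in> T. D f \<inter> D e = {}}"
      using less.prems by auto
    then show "real (card {S \<in> avoiding {f \<in> T. D f \<inter> D e = {}}. A f S})
        \<le> 2 * p * card (avoiding {f \<in> T. D f \<inter> D e = {}})"
      using IH(2) by blast
  qed (use e less.prems \<open>finite T\<close> in auto)
  with nonempty show ?case by blast
qed

lemma exists_avoiding_all: "\<exists>S \<subseteq> I. \<forall>e \<in> Ev. \<not> A e S"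
proof -
  have "avoiding Ev \<noteq> {}" using avoiding_invariant[of Ev] by auto
  then show ?thesis unfolding avoiding_def by auto
qed

end

section \<open>Lower tails for random subsets of paired indices\<close>

lemma card_Collect_split:
  "finite N \<Longrightarrow> card {x \<in> N. P x} = card {x \<in> N. P x \<and> Q x} + card {x \<in> N. P x \<and> \<not> Q x}"
  by (subst card_Un_disjoint[symmetric]) (auto intro: arg_cong[where f = card])

lemma sum_Pow_insert:
  assumes "finite I" "a \<notin> I"
  shows "sum g (Pow (insert a I)) = (\<Sum>S\<in>Pow I. g S + g (insert a S))"
proof -
  have "inj_on (insert a) (Pow I)"
    using assms(2) by (intro inj_onI) (metis PowD insert_ident subset_iff)
  moreover have "Pow I \<inter> insert a ` Pow I = {}" using assms(2) by auto
  ultimately show ?thesis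
    unfolding Pow_insert using assms(1) by (simp add: sum.union_disjoint sum.reindex sum.distrib)
qed

lemma power_add_power_le_midpoint:
  fixes l :: real
  assumes "b0 \<le> 1" "b1 \<le> 1"
  shows "l ^ b1 + l ^ b0 \<le> 2 * ((1 + l) / 2) ^ (b0 + b1)"
proof -
  have "2 * l \<le> 2 * ((1 + l) / 2) ^ 2"
    using zero_le_power2[of "1 - l"] by (simp add: power2_eq_square field_simps)
  moreover have "b0 = 0 \<or> b0 = 1" "b1 = 0 \<or> b1 = 1" using assms by auto
  ultimately show ?thesis by (auto simp: numeral_2_eq_2)
qed

lemma card_idx_mem_neq_split:
  assumes "finite N" "a \<notin> S"
  shows "card {x \<in> N. (idx x \<in> S) \<noteq> \<beta> x} =
           card {x \<in> {x \<in> N. idx x \<noteq> a}. (idx x \<in> S) \<noteq> \<beta> x} + card {x \<in> N. idx x = a \<and> \<beta> x}"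
    and "card {x \<in> N. (idx x \<in> insert a S) \<noteq> \<beta> x} =
           card {x \<in> {x \<in> N. idx x \<noteq> a}. (idx x \<in> S) \<noteq> \<beta> x} + card {x \<in> N. idx x = a \<and> \<not> \<beta> x}"
proof -
  have "card {x \<in> N. (idx x \<in> S) \<noteq> \<beta> x} =
      card {x \<in> N. (idx x \<in> S) \<noteq> \<beta> x \<and> idx x \<noteq> a} + card {x \<in> N. (idx x \<in> S) \<noteq> \<beta> x \<and> \<not> idx x \<noteq> a}"
    by (rule card_Collect_split[OF assms(1)])
  also have "{x \<in> N. (idx x \<in> S) \<noteq> \<beta> x \<and> idx x \<noteq> a} = {x \<in> {x \<in> N. idx x \<noteq> a}. (idx x \<in> S) \<noteq> \<beta> x}"
    by blast
  also have "{x \<in> N. (idx x \<in> S) \<noteq> \<beta> x \<and> \<not> idx x \<noteq> a} = {x \<in> N. idx x = a \<and> \<beta> x}"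
    using assms(2) by blast
  finally show "card {x \<in> N. (idx x \<in> S) \<noteq> \<beta> x} =
      card {x \<in> {x \<in> N. idx x \<noteq> a}. (idx x \<in> S) \<noteq> \<beta> x} + card {x \<in> N. idx x = a \<and> \<beta> x}" .
  have "card {x \<in> N. (idx x \<in> insert a S) \<noteq> \<beta> x} =
      card {x \<in> N. (idx x \<in> insert a S) \<noteq> \<beta> x \<and> idx x \<noteq> a}
      + card {x \<in> N. (idx x \<in> insert a S) \<noteq> \<beta> x \<and> \<not> idx x \<noteq> a}"
    by (rule card_Collect_split[OF assms(1)])
  also have "{x \<in> N. (idx x \<in> insert a S) \<noteq> \<beta> x \<and> idx x \<noteq> a} = {x \<in> {x \<in> N. idx x \<noteq> a}. (idx x \<in> S) \<noteq> \<beta> x}"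
    by blast
  also have "{x \<in> N. (idx x \<in> insert a S) \<noteq> \<beta> x \<and> \<not> idx x \<noteq> a} = {x \<in> N. idx x = a \<and> \<not> \<beta> x}"
    by blast
  finally show "card {x \<in> N. (idx x \<in> insert a S) \<noteq> \<beta> x} =
      card {x \<in> {x \<in> N. idx x \<noteq> a}. (idx x \<in> S) \<noteq> \<beta> x} + card {x \<in> N. idx x = a \<and> \<not> \<beta> x}" .
qed

lemma card_idx_mem_insert_split:
  assumes "finite N"
  shows "card {x \<in> N. idx x \<in> insert a I} = card {x \<in> {x \<in> N. idx x \<noteq> a}. idx x \<in> I}
           + (card {x \<in> N. idx x = a \<and> \<not> \<beta> x} + card {x \<in> N. idx x = a \<and> \<beta> x})"
proof -
  have "card {x \<in> N. idx x \<in> insert a I} =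
      card {x \<in> N. idx x \<in> insert a I \<and> idx x \<noteq> a} + card {x \<in> N. idx x \<in> insert a I \<and> \<not> idx x \<noteq> a}"
    by (rule card_Collect_split[OF assms])
  also have "{x \<in> N. idx x \<in> insert a I \<and> idx x \<noteq> a} = {x \<in> {x \<in> N. idx x \<noteq> a}. idx x \<in> I}"
    by blast
  also have "card {x \<in> N. idx x \<in> insert a I \<and> \<not> idx x \<noteq> a} =
      card {x \<in> N. (idx x \<in> insert a I \<and> \<not> idx x \<noteq> a) \<and> \<beta> x}
      + card {x \<in> N. (idx x \<in> insert a I \<and> \<not> idx x \<noteq> a) \<and> \<not> \<beta> x}"
    by (rule card_Collect_split[OF assms])
  also have "{x \<in> N. (idx x \<in> insert a I \<and> \<not> idx x \<noteq> a) \<and> \<beta> x} = {x \<in> N. idx x = a \<and> \<beta> x}"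
    by blast
  also have "{x \<in> N. (idx x \<in> insert a I \<and> \<not> idx x \<noteq> a) \<and> \<not> \<beta> x} = {x \<in> N. idx x = a \<and> \<not> \<beta> x}"
    by blast
  finally show ?thesis by simp
qed

text \<open>Summing over \<open>S \<subseteq> I\<close>, the indices in \<open>I\<close> contribute independent factors, each at most
  \<open>2 ((1 + l) / 2)^(size of its fibre)\<close> because a fibre holds at most one \<open>x\<close> with each value
  of \<open>\<beta>\<close>.\<close>
lemma sum_Pow_power_card_le:
  fixes idx :: "'v \<Rightarrow> 'i" and \<beta> :: "'v \<Rightarrow> bool" and l :: real
  assumes "finite I" "finite N" and l: "0 < l" "l \<le> 1"
    and opposite: "\<And>x x'. x \<in> N \<Longrightarrow> x' \<in> N \<Longrightarrow> x \<noteq> x' \<Longrightarrow> idx x = idx x' \<Longrightarrow> \<beta> x \<noteq> \<beta> x'"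
  shows "(\<Sum>S\<in>Pow I. l ^ card {x \<in> N. (idx x \<in> S) \<noteq> \<beta> x})
    \<le> 2 ^ card I * ((1 + l) / 2) ^ card {x \<in> N. idx x \<in> I} * l ^ card {x \<in> N. idx x \<notin> I \<and> \<beta> x}"
  using assms(1,2) opposite
proof (induction I arbitrary: N rule: finite_induct)
  case empty
  have "{x \<in> N. (idx x \<in> {}) \<noteq> \<beta> x} = {x \<in> N. idx x \<notin> {} \<and> \<beta> x}" by auto
  then show ?case by simp
next
  case (insert a I)
  define N' where "N' = {x \<in> N. idx x \<noteq> a}"
  define b0 where "b0 = card {x \<in> N. idx x = a \<and> \<not> \<beta> x}"
  define b1 where "b1 = card {x \<in> N. idx x = a \<and> \<beta> x}"
  have "finite N'" using insert.prems(1) unfolding N'_def by simp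
  have "b0 \<le> 1" "b1 \<le> 1"
    using insert.prems unfolding b0_def b1_def by (auto simp: card_le_Suc0_iff_eq)
  let ?c = "\<lambda>S. card {x \<in> N'. (idx x \<in> S) \<noteq> \<beta> x}"
  have split: "card {x \<in> N. (idx x \<in> S) \<noteq> \<beta> x} = ?c S + b1"
    "card {x \<in> N. (idx x \<in> insert a S) \<noteq> \<beta> x} = ?c S + b0" if "S \<in> Pow I" for S
  proof -
    have "a \<notin> S" using that insert.hyps(2) by blast
    from card_idx_mem_neq_split[OF insert.prems(1) this, where idx = idx and \<beta> = \<beta>]
    show "card {x \<in> N. (idx x \<in> S) \<noteq> \<beta> x} = ?c S + b1"
      "card {x \<in> N. (idx x \<in> insert a S) \<noteq> \<beta> x} = ?c S + b0"
      unfolding N'_def b0_def b1_def by simp_all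
  qed
  have "(\<Sum>S\<in>Pow (insert a I). l ^ card {x \<in> N. (idx x \<in> S) \<noteq> \<beta> x})
      = (\<Sum>S\<in>Pow I. l ^ ?c S * (l ^ b1 + l ^ b0))"
    unfolding sum_Pow_insert[OF insert.hyps(1,2)]
  proof (rule sum.cong[OF refl])
    fix S assume "S \<in> Pow I"
    show "l ^ card {x \<in> N. (idx x \<in> S) \<noteq> \<beta> x} + l ^ card {x \<in> N. (idx x \<in> insert a S) \<noteq> \<beta> x}
        = l ^ ?c S * (l ^ b1 + l ^ b0)"
      unfolding split[OF \<open>S \<in> Pow I\<close>] by (simp add: power_add distrib_left)
  qed
  also have "\<dots> = (\<Sum>S\<in>Pow I. l ^ ?c S) * (l ^ b1 + l ^ b0)"
    by (simp add: sum_distrib_right)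
  also have "\<dots> \<le> (2 ^ card I * ((1 + l) / 2) ^ card {x \<in> N'. idx x \<in> I}
                    * l ^ card {x \<in> N'. idx x \<notin> I \<and> \<beta> x}) * (2 * ((1 + l) / 2) ^ (b0 + b1))"
  proof (rule mult_mono)
    show "(\<Sum>S\<in>Pow I. l ^ ?c S) \<le> 2 ^ card I * ((1 + l) / 2) ^ card {x \<in> N'. idx x \<in> I}
                    * l ^ card {x \<in> N'. idx x \<notin> I \<and> \<beta> x}"
      using insert.IH[OF \<open>finite N'\<close>] insert.prems(2) unfolding N'_def by blast
    show "l ^ b1 + l ^ b0 \<le> 2 * ((1 + l) / 2) ^ (b0 + b1)"
      by (rule power_add_power_le_midpoint[OF \<open>b0 \<le> 1\<close> \<open>b1 \<le> 1\<close>])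
  qed (use l in \<open>simp_all add: sum_nonneg\<close>)
  also have "\<dots> = 2 ^ card (insert a I) * ((1 + l) / 2) ^ card {x \<in> N. idx x \<in> insert a I}
                    * l ^ card {x \<in> N. idx x \<notin> insert a I \<and> \<beta> x}"
  proof -
    have "{x \<in> N'. idx x \<notin> I \<and> \<beta> x} = {x \<in> N. idx x \<notin> insert a I \<and> \<beta> x}"
      unfolding N'_def by blast
    moreover have "card {x \<in> N. idx x \<in> insert a I} = card {x \<in> N'. idx x \<in> I} + (b0 + b1)"
      unfolding N'_def b0_def b1_def by (rule card_idx_mem_insert_split[OF insert.prems(1)])
    ultimately show ?thesis using insert.hyps by (simp add: power_add algebra_simps)
  qed
  finally show ?case .
qed


lemma card_subsets_lower_tail_le:
  fixes idx :: "'v \<Rightarrow> 'i" and \<beta> :: "'v \<Rightarrow> bool"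
  assumes "finite I" "finite N"
    and opposite: "\<And>x x'. x \<in> N \<Longrightarrow> x' \<in> N \<Longrightarrow> x \<noteq> x' \<Longrightarrow> idx x = idx x' \<Longrightarrow> \<beta> x \<noteq> \<beta> x'"
    and c: "c \<le> card {x \<in> N. idx x \<in> I}"
  shows "real (card {S. S \<subseteq> I \<and> card {x \<in> N. (idx x \<in> S) \<noteq> \<beta> x} \<le> m})
           \<le> 2 ^ card I * (3/2) ^ m * (5/6) ^ c"
proof -
  let ?f = "\<lambda>S. card {x \<in> N. (idx x \<in> S) \<noteq> \<beta> x}"
  let ?B = "{S. S \<subseteq> I \<and> ?f S \<le> m}"
  have "real (card ?B) * (2/3) ^ m = (\<Sum>S\<in>?B. (2/3) ^ m)" by simp
  also have "\<dots> \<le> (\<Sum>S\<in>?B. (2/3) ^ ?f S)"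
    by (rule sum_mono) (simp add: power_decreasing)
  also have "\<dots> \<le> (\<Sum>S\<in>Pow I. (2/3) ^ ?f S)"
    by (rule sum_mono2) (use \<open>finite I\<close> in auto)
  also have "\<dots> \<le> 2 ^ card I * (5/6) ^ card {x \<in> N. idx x \<in> I} * (2/3) ^ card {x \<in> N. idx x \<notin> I \<and> \<beta> x}"
    using sum_Pow_power_card_le[OF assms(1,2), of "2/3" idx \<beta>] opposite by simp
  also have "\<dots> \<le> 2 ^ card I * (5/6) ^ c * 1"
    using c by (intro mult_mono power_le_one mult_left_mono power_decreasing) simp_all
  finally have bound: "real (card ?B) * (2/3) ^ m \<le> 2 ^ card I * (5/6) ^ c"
    by simp
  have "(2/3 :: real) ^ m * (3/2) ^ m = 1"
    by (simp flip: power_mult_distrib)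
  then have "real (card ?B) = real (card ?B) * (2/3) ^ m * (3/2) ^ m"
    by (simp add: mult.assoc)
  also have "\<dots> \<le> 2 ^ card I * (5/6) ^ c * (3/2) ^ m"
    using bound by (rule mult_right_mono) simp
  also have "\<dots> = 2 ^ card I * (3/2) ^ m * (5/6) ^ c"
    by (simp add: mult_ac)
  finally show ?thesis .
qed

section \<open>Pairs, colours and the bipartitions\<close>

lemma nat_eq_if_bits_eq:
  fixes a b :: nat
  assumes "a < 2 ^ m" "b < 2 ^ m" "\<And>n. n < m \<Longrightarrow> bit a n = bit b n"
  shows "a = b"
proof -
  have "take_bit m a = take_bit m b"
    by (rule bit_eqI) (use assms(3) in \<open>auto simp: bit_take_bit_iff\<close>)
  then show ?thesis using assms(1,2) by (simp add: take_bit_nat_eq_self)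
qed

lemma not_bit_if_less_power:
  fixes a :: nat
  assumes "a < 2 ^ m" "m \<le> n"
  shows "\<not> bit a n"
proof -
  have "a < 2 ^ n" using assms by (meson order_less_le_trans one_le_numeral power_increasing)
  then show ?thesis by (simp add: bit_nat_def)
qed

lemma greedy_colouring:
  assumes "finite V" and degree: "\<And>v. v \<in> V \<Longrightarrow> card {u \<in> V. R v u} \<le> K"
    and sym: "\<And>u v. R u v \<Longrightarrow> R v u"
  shows "\<exists>c. (\<forall>v \<in> V. c v \<le> K) \<and> (\<forall>u \<in> V. \<forall>v \<in> V. R u v \<and> u \<noteq> v \<longrightarrow> c u \<noteq> c v)"
proof -
  have "\<exists>c. (\<forall>v \<in> W. c v \<le> K) \<and> (\<forall>u \<in> W. \<forall>v \<in> W. R u v \<and> u \<noteq> v \<longrightarrow> c u \<noteq> c v)"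
    if "finite W" "W \<subseteq> V" for W
    using that
  proof (induction W rule: finite_induct)
    case empty
    then show ?case by auto
  next
    case (insert a W)
    then obtain c where c_le: "\<forall>v \<in> W. c v \<le> K"
      and c_proper: "\<forall>u \<in> W. \<forall>v \<in> W. R u v \<and> u \<noteq> v \<longrightarrow> c u \<noteq> c v"
      by auto
    have "card (c ` {u \<in> W. R a u}) \<le> card {u \<in> W. R a u}"
      using insert.hyps(1) by (intro card_image_le) simp
    also have "\<dots> \<le> card {u \<in> V. R a u}"
      using insert.prems \<open>finite V\<close> by (intro card_mono) auto
    also have "\<dots> < card {0..K}" using degree[of a] insert.prems by simp
    finally have "\<not> {0..K} \<subseteq> c ` {u \<in> W. R a u}"
      using card_mono[of "c ` {u \<in> W. R a u}" "{0..K}"] insert.hyps(1) by auto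
    then obtain colour where colour: "colour \<in> {0..K}" "colour \<notin> c ` {u \<in> W. R a u}"
      by blast
    have "(c(a := colour)) u \<noteq> (c(a := colour)) v"
      if "u \<in> insert a W" "v \<in> insert a W" "R u v" "u \<noteq> v" for u v
    proof (cases "u = a")
      case True
      then have "v \<in> {u \<in> W. R a u}" using that by auto
      then show ?thesis using True colour(2) that(4) by force
    next
      case False
      show ?thesis
      proof (cases "v = a")
        case True
        then have "u \<in> {u \<in> W. R a u}" using that sym \<open>u \<noteq> a\<close> by auto
        then show ?thesis using True colour(2) that(4) by force
      next
        case False
        then show ?thesis using \<open>u \<noteq> a\<close> that c_proper by auto
      qed
    qed
    moreover have "\<forall>v \<in> insert a W. (c(a := colour)) v \<le> K" using c_le colour(1) by simp
    ultimately show ?case by (intro exI[of _ "c(a := colour)"]) blast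
  qed
  then show ?thesis using \<open>finite V\<close> by blast
qed

locale pairing =
  fixes X :: "'a set" and pos :: "'a \<Rightarrow> nat"
  assumes finite_X: "finite X" and bij_pos: "bij_betw pos X {0..<card X}"
begin

definition pair :: "'a \<Rightarrow> nat" where
  "pair x = pos x div 2"

definition npairs :: nat where
  "npairs = card X div 2"

lemma pos_less: "x \<in> X \<Longrightarrow> pos x < card X"
  using bij_pos by (auto simp: bij_betw_def)

lemma pos_eqD: "x \<in> X \<Longrightarrow> x' \<in> X \<Longrightarrow> pos x = pos x' \<Longrightarrow> x = x'"
  using bij_pos by (auto simp: bij_betw_def inj_on_def)

lemma pos_surj: "t < card X \<Longrightarrow> \<exists>x \<in> X. pos x = t"
  using bij_pos unfolding bij_betw_def by (metis atLeastLessThan_iff imageE zero_le)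

lemma odd_pos_neq:
  assumes "x \<in> X" "x' \<in> X" "x \<noteq> x'" "pair x = pair x'"
  shows "odd (pos x) \<noteq> odd (pos x')"
proof -
  have "pos x \<noteq> pos x'" using pos_eqD assms(1-3) by blast
  then show ?thesis using assms(4) unfolding pair_def
    by (metis div_mult_mod_eq odd_iff_mod_2_eq_one even_iff_mod_2_eq_zero)
qed

lemma card_pair_fibre_le: "card {x \<in> X. pair x = i} \<le> 2"
proof -
  have "inj_on pos {x \<in> X. pair x = i}" using pos_eqD by (auto intro: inj_onI)
  then have "card {x \<in> X. pair x = i} = card (pos ` {x \<in> X. pair x = i})"
    by (simp add: card_image)
  also have "\<dots> \<le> card {2 * i, 2 * i + 1}"
    by (rule card_mono) (auto simp: pair_def)
  finally show ?thesis by simp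
qed

lemma card_unpaired_le: "card {x \<in> X. pair x \<notin> {0..<npairs}} \<le> 1"
proof -
  have "pos x = 2 * npairs" if "x \<in> X" "pair x \<notin> {0..<npairs}" for x
    using that pos_less[of x] unfolding pair_def npairs_def by auto
  then show ?thesis using finite_X pos_eqD by (auto simp: card_le_Suc0_iff_eq)
qed

lemma card_split_balanced:
  assumes opposite: "\<And>x x'. x \<in> X \<Longrightarrow> x' \<in> X \<Longrightarrow> x \<noteq> x' \<Longrightarrow> pair x = pair x' \<Longrightarrow> \<sigma> x \<noteq> \<sigma> x'"
  shows "\<bar>int (card {x \<in> X. \<sigma> x}) - int (card {x \<in> X. \<not> \<sigma> x})\<bar> \<le> 1"
proof -
  have half: "npairs \<le> card {x \<in> X. \<sigma> x = b}" for b
  proof -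
    have "\<exists>x \<in> X. \<sigma> x = b \<and> pair x = i" if i: "i < npairs" for i
    proof -
      obtain x0 where x0: "x0 \<in> X" "pos x0 = 2 * i"
        using pos_surj[of "2 * i"] i unfolding npairs_def by fastforce
      obtain x1 where x1: "x1 \<in> X" "pos x1 = 2 * i + 1"
        using pos_surj[of "2 * i + 1"] i unfolding npairs_def by fastforce
      have "pair x0 = i" "pair x1 = i" "x0 \<noteq> x1" using x0 x1 unfolding pair_def by auto
      then show ?thesis using opposite[OF x0(1) x1(1)] x0(1) x1(1) by metis
    qed
    then obtain g where g: "\<And>i. i < npairs \<Longrightarrow> g i \<in> X \<and> \<sigma> (g i) = b \<and> pair (g i) = i"
      by metis
    have "inj_on g {0..<npairs}" by (rule inj_onI) (metis g atLeastLessThan_iff)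
    moreover have "g ` {0..<npairs} \<subseteq> {x \<in> X. \<sigma> x = b}" using g by auto
    ultimately show ?thesis using card_inj_on_le[of g "{0..<npairs}"] finite_X by fastforce
  qed
  have "card X = card {x \<in> X. \<sigma> x} + card {x \<in> X. \<not> \<sigma> x}"
    using card_Collect_split[OF finite_X, of "\<lambda>_. True" \<sigma>] by simp
  moreover have "card X \<le> 2 * npairs + 1" unfolding npairs_def by simp
  ultimately show ?thesis using half[of True] half[of False] by simp
qed

definition pair_adjacent :: "('a \<Rightarrow> 'a \<Rightarrow> bool) \<Rightarrow> nat \<Rightarrow> nat \<Rightarrow> bool" where
  "pair_adjacent G i i' \<longleftrightarrow> (\<exists>u v. pair u = i \<and> pair v = i' \<and> G u v)"

lemma card_pair_adjacent_le:
  assumes sym: "\<And>u v. G u v \<Longrightarrow> G v u" and G_X: "\<And>u v. G u v \<Longrightarrow> u \<in> X"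
    and degree: "\<And>v. v \<in> X \<Longrightarrow> card {u. G v u} \<le> \<Delta>"
  shows "card {i' \<in> pair ` X. pair_adjacent G i i'} \<le> 2 * \<Delta>"
proof -
  have finite_nbhd: "finite {u. G v u}" for v
    by (rule finite_subset[OF _ finite_X]) (use G_X[OF sym] in blast)
  have "{i' \<in> pair ` X. pair_adjacent G i i'} \<subseteq> pair ` (\<Union>x \<in> {x \<in> X. pair x = i}. {u. G x u})"
  proof
    fix i' assume "i' \<in> {i' \<in> pair ` X. pair_adjacent G i i'}"
    then obtain w v where "pair w = i" "pair v = i'" "G w v" unfolding pair_adjacent_def by blast
    moreover have "w \<in> X" using G_X \<open>G w v\<close> by blast
    ultimately show "i' \<in> pair ` (\<Union>x \<in> {x \<in> X. pair x = i}. {u. G x u})"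
      by (intro image_eqI[of _ _ v]) auto
  qed
  then have "card {i' \<in> pair ` X. pair_adjacent G i i'} \<le> card (pair ` (\<Union>x \<in> {x \<in> X. pair x = i}. {u. G x u}))"
    by (rule card_mono[rotated]) (simp add: finite_X finite_nbhd)
  also have "\<dots> \<le> card (\<Union>x \<in> {x \<in> X. pair x = i}. {u. G x u})"
    by (rule card_image_le) (simp add: finite_X finite_nbhd)
  also have "\<dots> \<le> (\<Sum>x \<in> {x \<in> X. pair x = i}. card {u. G x u})"
    by (rule card_UN_le) (simp add: finite_X)
  also have "\<dots> \<le> (\<Sum>x \<in> {x \<in> X. pair x = i}. \<Delta>)"
    by (rule sum_mono) (simp add: degree)
  also have "\<dots> \<le> 2 * \<Delta>"
    using card_pair_fibre_le[of i] by simp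
  finally show ?thesis .
qed

lemma exists_pair_colouring:
  assumes sym: "\<And>u v. G u v \<Longrightarrow> G v u" and G_X: "\<And>u v. G u v \<Longrightarrow> u \<in> X"
    and degree: "\<And>v. v \<in> X \<Longrightarrow> card {u. G v u} \<le> \<Delta>"
  shows "\<exists>col. (\<forall>x \<in> X. col (pair x) \<le> 2 * \<Delta>) \<and>
           (\<forall>x x'. G x x' \<and> pair x \<noteq> pair x' \<longrightarrow> col (pair x) \<noteq> col (pair x'))"
proof -
  have "pair_adjacent G i' i" if "pair_adjacent G i i'" for i i'
    using that unfolding pair_adjacent_def by (metis sym)
  then have "\<exists>col. (\<forall>i \<in> pair ` X. col i \<le> 2 * \<Delta>) \<and>
      (\<forall>i \<in> pair ` X. \<forall>i' \<in> pair ` X. pair_adjacent G i i' \<and> i \<noteq> i' \<longrightarrow> col i \<noteq> col i')"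
    using card_pair_adjacent_le[OF sym G_X degree] by (intro greedy_colouring) (simp_all add: finite_X)
  then obtain col where col_le: "\<forall>i \<in> pair ` X. col i \<le> 2 * \<Delta>"
    and col_proper: "\<forall>i \<in> pair ` X. \<forall>i' \<in> pair ` X. pair_adjacent G i i' \<and> i \<noteq> i' \<longrightarrow> col i \<noteq> col i'"
    by blast
  have "col (pair x) \<noteq> col (pair x')" if "G x x'" "pair x \<noteq> pair x'" for x x'
  proof -
    have "x \<in> X" "x' \<in> X" using G_X[OF that(1)] G_X[OF sym[OF that(1)]] .
    moreover have "pair_adjacent G (pair x) (pair x')" unfolding pair_adjacent_def using that(1) by blast
    ultimately show ?thesis using col_proper that(2) by blast
  qed
  with col_le show ?thesis by blast
qed

end

locale pair_splitting = pairing X pos for X :: "'a set" and pos +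
  fixes col :: "nat \<Rightarrow> nat" and k :: nat
  assumes col_less: "x \<in> X \<Longrightarrow> col (pair x) < 2 ^ (k - 1)"
begin

definition flip :: "nat \<Rightarrow> 'a \<Rightarrow> bool" where
  "flip j x \<longleftrightarrow> bit (col (pair x)) (j - 1) \<noteq> odd (pos x)"

definition side :: "nat \<Rightarrow> nat set \<Rightarrow> 'a \<Rightarrow> bool" where
  "side j S x \<longleftrightarrow> (pair x \<in> S) \<noteq> flip j x"

lemma flip_opposite:
  assumes "x \<in> X" "x' \<in> X" "x \<noteq> x'" "pair x = pair x'"
  shows "flip j x \<noteq> flip j x'"
  using odd_pos_neq[OF assms] assms(4) unfolding flip_def by simp

lemma card_side_balanced:
  "\<bar>int (card {x \<in> X. side j S x}) - int (card {x \<in> X. \<not> side j S x})\<bar> \<le> 1"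
proof (rule card_split_balanced)
  fix x x' assume "x \<in> X" "x' \<in> X" "x \<noteq> x'" "pair x = pair x'"
  with flip_opposite[OF this, of j] show "side j S x \<noteq> side j S x'"
    unfolding side_def by simp
qed

lemma side_separates:
  assumes "1 \<le> k" "x \<in> X" "x' \<in> X" "x \<noteq> x'"
    and col_eq: "col (pair x) = col (pair x') \<Longrightarrow> pair x = pair x'"
  shows "\<exists>j \<in> {1..k}. side j S x \<noteq> side j S x'"
proof (cases "pair x = pair x'")
  case True
  then show ?thesis using flip_opposite[OF assms(2-4) True, of 1] assms(1) unfolding side_def by auto
next
  case False
  define base where "base z \<longleftrightarrow> (pair z \<in> S) \<noteq> odd (pos z)" for z
  have side_bit: "side j S z \<longleftrightarrow> base z \<noteq> bit (col (pair z)) (j - 1)" for j z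
    unfolding side_def flip_def base_def by auto
  show ?thesis
  proof (rule ccontr)
    assume "\<not> ?thesis"
    then have same: "side j S x = side j S x'" if "j \<in> {1..k}" for j using that by blast
    have "\<not> bit (col (pair z)) (k - 1)" if "z \<in> X" for z
      using not_bit_if_less_power[OF col_less[OF that]] by simp
    then have "base x = base x'" using same[of k] assms(1-3) unfolding side_bit by simp
    moreover have "bit (col (pair x)) m = bit (col (pair x')) m" if "m < k - 1" for m
    proof -
      have "(base x \<noteq> bit (col (pair x)) m) = (base x' \<noteq> bit (col (pair x')) m)"
        using same[of "m + 1"] that unfolding side_bit by simp
      then show ?thesis using \<open>base x = base x'\<close> by (cases "base x'") simp_all
    qed
    ultimately have "col (pair x) = col (pair x')"
      using nat_eq_if_bits_eq col_less assms(2,3) by blast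
    then show False using col_eq False by blast
  qed
qed

lemma card_subsets_unbalanced_le:
  assumes "N \<subseteq> X" "c \<le> card {x \<in> N. pair x \<in> {0..<npairs}}"
  shows "real (card {S. S \<subseteq> {0..<npairs} \<and>
                 (card {x \<in> N. side j S x} \<le> m \<or> card {x \<in> N. \<not> side j S x} \<le> m)})
           \<le> 2 * (2 ^ npairs * (3/2) ^ m * (5/6) ^ c)"
proof -
  have "finite N" using assms(1) finite_X finite_subset by blast
  let ?I = "{0..<npairs}"
  have opposite: "\<And>x x'. x \<in> N \<Longrightarrow> x' \<in> N \<Longrightarrow> x \<noteq> x' \<Longrightarrow> pair x = pair x' \<Longrightarrow> flip j x \<noteq> flip j x'"
    and opposite': "\<And>x x'. x \<in> N \<Longrightarrow> x' \<in> N \<Longrightarrow> x \<noteq> x' \<Longrightarrow> pair x = pair x' \<Longrightarrow> (\<not> flip j x) \<noteq> (\<not> flip j x')"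
    using flip_opposite assms(1) by blast+
  have tail: "real (card {S. S \<subseteq> ?I \<and> card {x \<in> N. side j S x} \<le> m}) \<le> 2 ^ npairs * (3/2) ^ m * (5/6) ^ c"
    "real (card {S. S \<subseteq> ?I \<and> card {x \<in> N. \<not> side j S x} \<le> m}) \<le> 2 ^ npairs * (3/2) ^ m * (5/6) ^ c"
    using card_subsets_lower_tail_le[OF finite_atLeastLessThan \<open>finite N\<close> opposite assms(2), where m = m]
      card_subsets_lower_tail_le[OF finite_atLeastLessThan \<open>finite N\<close> opposite' assms(2), where m = m]
    unfolding side_def by simp_all
  have "card {S. S \<subseteq> ?I \<and> (card {x \<in> N. side j S x} \<le> m \<or> card {x \<in> N. \<not> side j S x} \<le> m)}
      \<le> card {S. S \<subseteq> ?I \<and> card {x \<in> N. side j S x} \<le> m} + card {S. S \<subseteq> ?I \<and> card {x \<in> N. \<not> side j S x} \<le> m}"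
    by (rule order_trans[OF _ card_Un_le]) (rule eq_imp_le, rule arg_cong[where f = card], blast)
  then show ?thesis using tail by linarith
qed

end

section \<open>Balancing all neighbourhoods at once\<close>

lemma cubic_times_geometric_le_one:
  fixes u :: nat
  assumes "u \<ge> 60"
  shows "32000000 * (3/2::real)^20 * (real u + 1)^3 * (53/100)^u \<le> 1"
  using assms
proof (induction u rule: dec_induct)
  case base
  then show ?case by (simp add: power_divide)
next
  case (step u)
  have r: "(real u + 2)^3 * (53/100) \<le> (real u + 1)^3"
  proof -
    have "(real u + 2) \<le> (6/5) * (real u + 1)" using step(1) by simp
    then have "(real u + 2)^3 \<le> ((6/5) * (real u + 1))^3" by (rule power_mono) simp
    also have "\<dots> = (216/125) * (real u + 1)^3" unfolding power_mult_distrib by (simp add: power_divide)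
    finally have "(real u + 2)^3 \<le> (216/125) * (real u + 1)^3" .
    moreover have "0 \<le> (real u + 1)^3" by simp
    ultimately show ?thesis by linarith
  qed
  have "32000000 * (3/2::real)^20 * (real (Suc u) + 1)^3 * (53/100)^(Suc u)
      = 32000000 * (3/2::real)^20 * ((real u + 2)^3 * (53/100)) * (53/100)^u"
    by (simp add: algebra_simps)
  also have "\<dots> \<le> 32000000 * (3/2::real)^20 * (real u + 1)^3 * (53/100)^u"
    using r by (intro mult_right_mono mult_left_mono) auto
  also have "\<dots> \<le> 1" using step(3) .
  finally show ?case .
qed

lemma local_lemma_condition:
  fixes d :: nat
  assumes "1000000 \<le> d"
  shows "4 * (2 * (3/2) ^ (20 * (d div 100 + 1)) * (5/6) ^ (48 * (d div 100))) * (4 * real d ^ 3) \<le> 1"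
proof -
  define u where "u = d div 100"
  define \<rho> :: real where "\<rho> = (3/2) ^ 20 * (5/6) ^ 48"
  have "u \<ge> 60" using assms unfolding u_def by simp
  have "\<rho> \<le> 53/100" "0 \<le> \<rho>" unfolding \<rho>_def by (simp_all add: power_divide)
  have "(3/2 :: real) ^ (20 * (u + 1)) = (3/2) ^ 20 * ((3/2) ^ 20) ^ u"
  proof -
    have "20 * (u + 1) = 20 + 20 * u" by simp
    then show ?thesis by (simp only: power_add power_mult)
  qed
  moreover have "(5/6 :: real) ^ (48 * u) = ((5/6) ^ 48) ^ u" by (rule power_mult)
  ultimately have p: "2 * (3/2) ^ (20 * (u + 1)) * (5/6) ^ (48 * u) = 2 * (3/2) ^ 20 * \<rho> ^ u"
    unfolding \<rho>_def by (simp add: power_mult_distrib)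
  have "d \<le> 100 * (u + 1)" unfolding u_def by simp
  then have "real d \<le> real (100 * (u + 1))" by (rule of_nat_mono)
  then have "real d \<le> 100 * (real u + 1)" by simp
  then have "real d ^ 3 \<le> (100 * (real u + 1)) ^ 3" by (rule power_mono) simp
  moreover have "(100 * (real u + 1)) ^ 3 = 1000000 * (real u + 1) ^ 3"
    by (simp only: power_mult_distrib) simp
  ultimately have d3: "4 * real d ^ 3 \<le> 4000000 * (real u + 1) ^ 3"
    by linarith
  have "4 * (2 * (3/2) ^ 20 * \<rho> ^ u) * (4 * real d ^ 3)
      \<le> 4 * (2 * (3/2) ^ 20 * \<rho> ^ u) * (4000000 * (real u + 1) ^ 3)"
    using d3 \<open>0 \<le> \<rho>\<close> by (intro mult_left_mono) simp_all
  also have "\<dots> = 32000000 * (3/2) ^ 20 * (real u + 1) ^ 3 * \<rho> ^ u" by (simp add: mult_ac)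
  also have "\<dots> \<le> 32000000 * (3/2) ^ 20 * (real u + 1) ^ 3 * (53/100) ^ u"
    using power_mono[OF \<open>\<rho> \<le> 53/100\<close> \<open>0 \<le> \<rho>\<close>] by (intro mult_left_mono) simp_all
  also have "\<dots> \<le> 1" by (rule cubic_times_geometric_le_one[OF \<open>u \<ge> 60\<close>])
  finally show ?thesis unfolding u_def[symmetric] p .
qed

locale bipartite_splitting = pair_splitting X pos col k
  for X :: "nat set" and pos col k +
  fixes Y :: "nat set" and E :: "nat \<Rightarrow> nat \<Rightarrow> bool" and d :: nat
  assumes finite_Y: "finite Y"
    and E_sym: "\<And>u v. E u v \<Longrightarrow> E v u"
    and nbhd_Y: "\<And>y. y \<in> Y \<Longrightarrow> nbhd E y \<subseteq> X"
    and nbhd_X: "\<And>x. x \<in> X \<Longrightarrow> nbhd E x \<subseteq> Y"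
    and degree_le: "\<And>v. v \<in> X \<union> Y \<Longrightarrow> card (nbhd E v) \<le> d"
    and degree_ge: "\<And>y. y \<in> Y \<Longrightarrow> 49 * real d / 100 \<le> card (nbhd E y)"
    and d_large: "1000000 \<le> d" and k_le: "k \<le> 2 * d"
begin

definition events :: "(nat \<times> nat) set" where
  "events = Y \<times> {1..k}"

definition unbalanced :: "nat \<times> nat \<Rightarrow> nat set \<Rightarrow> bool" where
  "unbalanced e S \<longleftrightarrow>
     real (card (nbhd E (fst e) \<inter> {x \<in> X. side (snd e) S x})) < real d / 5 \<or>
     real (card (nbhd E (fst e) \<inter> {x \<in> X. \<not> side (snd e) S x})) < real d / 5"

definition support :: "nat \<times> nat \<Rightarrow> nat set" where
  "support e = pair ` nbhd E (fst e) \<inter> {0..<npairs}"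

text \<open>With \<open>u = d div 100\<close>, a vertex of \<open>Y\<close> has at least \<open>48 u\<close> neighbours in complete
  pairs, and an unbalanced side has at most \<open>d div 5 \<le> 20 (u + 1)\<close> of them.\<close>

definition p :: real where
  "p = 2 * (3/2) ^ (20 * (d div 100 + 1)) * (5/6) ^ (48 * (d div 100))"

lemma unbalanced_determined:
  assumes "e \<in> events" "S \<subseteq> {0..<npairs}"
  shows "unbalanced e S \<longleftrightarrow> unbalanced e (S \<inter> support e)"
proof -
  have "side j S x \<longleftrightarrow> side j (S \<inter> support e) x" if "x \<in> nbhd E (fst e)" for j x
    using that assms(2) unfolding side_def support_def by auto
  then have "nbhd E (fst e) \<inter> {x \<in> X. side j S x} = nbhd E (fst e) \<inter> {x \<in> X. side j (S \<inter> support e) x}"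
    "nbhd E (fst e) \<inter> {x \<in> X. \<not> side j S x} = nbhd E (fst e) \<inter> {x \<in> X. \<not> side j (S \<inter> support e) x}"
    for j by blast+
  then show ?thesis unfolding unbalanced_def by simp
qed

lemma card_paired_nbhd_ge:
  assumes "y \<in> Y"
  shows "48 * (d div 100) \<le> card {x \<in> nbhd E y. pair x \<in> {0..<npairs}}"
proof -
  have "nbhd E y \<subseteq> X" using nbhd_Y[OF assms] .
  then have "finite (nbhd E y)" using finite_X finite_subset by blast
  have "card {x \<in> nbhd E y. pair x \<notin> {0..<npairs}} \<le> card {x \<in> X. pair x \<notin> {0..<npairs}}"
    using \<open>nbhd E y \<subseteq> X\<close> finite_X by (intro card_mono) auto
  then have "card {x \<in> nbhd E y. pair x \<notin> {0..<npairs}} \<le> 1" using card_unpaired_le by simp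
  moreover have "card (nbhd E y) =
      card {x \<in> nbhd E y. pair x \<in> {0..<npairs}} + card {x \<in> nbhd E y. pair x \<notin> {0..<npairs}}"
    using card_Collect_split[OF \<open>finite (nbhd E y)\<close>, of "\<lambda>_. True" "\<lambda>x. pair x \<in> {0..<npairs}"] by simp
  moreover have "49 * (d div 100) \<le> card (nbhd E y)"
    using degree_ge[OF assms] by linarith
  moreover have "60 \<le> d div 100" using d_large by simp
  ultimately show ?thesis by linarith
qed

lemma card_unbalanced_le:
  assumes "e \<in> events"
  shows "real (card {S. S \<subseteq> {0..<npairs} \<and> unbalanced e S}) \<le> p * 2 ^ card {0..<npairs}"
proof -
  obtain y j where e: "e = (y, j)" and "y \<in> Y" using assms unfolding events_def by auto
  define N where "N = nbhd E y"
  define u where "u = d div 100"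
  have "N \<subseteq> X" unfolding N_def using nbhd_Y[OF \<open>y \<in> Y\<close>] .
  have c: "48 * u \<le> card {x \<in> N. pair x \<in> {0..<npairs}}"
    unfolding N_def u_def by (rule card_paired_nbhd_ge[OF \<open>y \<in> Y\<close>])
  have small: "c \<le> d div 5" if "real c < real d / 5" for c
  proof -
    have "c * 5 \<le> d" using that by linarith
    then have "c * 5 div 5 \<le> d div 5" by (rule div_le_mono)
    then show ?thesis by simp
  qed
  have "nbhd E y \<inter> {x \<in> X. side j S x} = {x \<in> N. side j S x}"
    "nbhd E y \<inter> {x \<in> X. \<not> side j S x} = {x \<in> N. \<not> side j S x}" for S
    using \<open>N \<subseteq> X\<close> unfolding N_def by blast+
  then have "unbalanced e S \<Longrightarrow> card {x \<in> N. side j S x} \<le> d div 5 \<or> card {x \<in> N. \<not> side j S x} \<le> d div 5" for S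
    unfolding unbalanced_def e fst_conv snd_conv using small by auto
  then have "card {S. S \<subseteq> {0..<npairs} \<and> unbalanced e S} \<le>
      card {S. S \<subseteq> {0..<npairs} \<and> (card {x \<in> N. side j S x} \<le> d div 5 \<or> card {x \<in> N. \<not> side j S x} \<le> d div 5)}"
    by (intro card_mono) auto
  then have "real (card {S. S \<subseteq> {0..<npairs} \<and> unbalanced e S}) \<le> 2 * (2 ^ npairs * (3/2) ^ (d div 5) * (5/6) ^ (48 * u))"
    using card_subsets_unbalanced_le[OF \<open>N \<subseteq> X\<close> c, of j "d div 5"] by linarith
  also have "\<dots> \<le> 2 * (2 ^ npairs * (3/2) ^ (20 * (u + 1)) * (5/6) ^ (48 * u))"
    unfolding u_def by (intro mult_left_mono mult_right_mono power_increasing) simp_all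
  also have "\<dots> = p * 2 ^ card {0..<npairs}" unfolding p_def u_def by (simp add: mult_ac)
  finally show ?thesis .
qed

lemma finite_nbhd: "v \<in> X \<union> Y \<Longrightarrow> finite (nbhd E v)"
  using finite_subset[OF nbhd_X finite_Y] finite_subset[OF nbhd_Y finite_X] by blast

lemma card_nbhd_pair_le: "card (\<Union>x \<in> {x \<in> X. pair x = i}. nbhd E x) \<le> 2 * d"
proof -
  have "card (\<Union>x \<in> {x \<in> X. pair x = i}. nbhd E x) \<le> (\<Sum>x \<in> {x \<in> X. pair x = i}. card (nbhd E x))"
    by (rule card_UN_le) (simp add: finite_X)
  also have "\<dots> \<le> (\<Sum>x \<in> {x \<in> X. pair x = i}. d)"
    by (rule sum_mono) (simp add: degree_le)
  also have "\<dots> \<le> 2 * d" using card_pair_fibre_le[of i] by simp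
  finally show ?thesis .
qed

lemma card_dependent_events_le:
  assumes "e \<in> events"
  shows "card {f \<in> events. support f \<inter> support e \<noteq> {}} \<le> 4 * d ^ 3"
proof -
  obtain y j where e: "e = (y, j)" and "y \<in> Y" using assms unfolding events_def by auto
  define Z where "Z = (\<Union>x \<in> nbhd E y. \<Union>x' \<in> {x' \<in> X. pair x' = pair x}. nbhd E x')"
  have "{f \<in> events. support f \<inter> support e \<noteq> {}} \<subseteq> Z \<times> {1..k}"
  proof clarify
    fix y' j' assume "(y', j') \<in> events" "support (y', j') \<inter> support e \<noteq> {}"
    then obtain x' x where "x' \<in> nbhd E y'" "x \<in> nbhd E y" "pair x' = pair x" "y' \<in> Y" "j' \<in> {1..k}"
      unfolding support_def e events_def by auto
    moreover have "x' \<in> X" using \<open>x' \<in> nbhd E y'\<close> nbhd_Y[OF \<open>y' \<in> Y\<close>] by blast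
    moreover have "y' \<in> nbhd E x'" using \<open>x' \<in> nbhd E y'\<close> E_sym unfolding nbhd_def by blast
    ultimately show "y' \<in> Z \<and> j' \<in> {1..k}" unfolding Z_def by blast
  qed
  moreover have "finite Z"
    unfolding Z_def using \<open>y \<in> Y\<close> by (intro finite_UN_I) (simp_all add: finite_nbhd finite_X)
  ultimately have "card {f \<in> events. support f \<inter> support e \<noteq> {}} \<le> card Z * k"
    using card_mono[of "Z \<times> {1..k}"] by (simp add: card_cartesian_product)
  moreover have "card Z \<le> d * (2 * d)"
  proof -
    have "card Z \<le> (\<Sum>x \<in> nbhd E y. card (\<Union>x' \<in> {x' \<in> X. pair x' = pair x}. nbhd E x'))"
      unfolding Z_def by (rule card_UN_le) (simp add: finite_nbhd \<open>y \<in> Y\<close>)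
    also have "\<dots> \<le> (\<Sum>x \<in> nbhd E y. 2 * d)"
      by (rule sum_mono) (rule card_nbhd_pair_le)
    also have "\<dots> \<le> d * (2 * d)" using degree_le[of y] \<open>y \<in> Y\<close> by simp
    finally show ?thesis .
  qed
  ultimately have "card {f \<in> events. support f \<inter> support e \<noteq> {}} \<le> d * (2 * d) * (2 * d)"
    using k_le by (meson le_trans mult_le_mono)
  then show ?thesis by (simp add: power3_eq_cube)
qed

lemma exists_balanced_sides:
  "\<exists>S \<subseteq> {0..<npairs}. \<forall>y \<in> Y. \<forall>j \<in> {1..k}.
     real d / 5 \<le> card (nbhd E y \<inter> {x \<in> X. side j S x}) \<and>
     real d / 5 \<le> card (nbhd E y \<inter> {x \<in> X. \<not> side j S x})"
proof -
  have p_cond: "4 * p * real (4 * d ^ 3) \<le> 1"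
    using local_lemma_condition[OF d_large] unfolding p_def by simp
  moreover have "1 \<le> 4 * d ^ 3" using d_large by (simp add: Suc_le_eq)
  then have "1 \<le> real (4 * d ^ 3)" by (metis of_nat_1 of_nat_le_iff)
  moreover have "0 \<le> p" unfolding p_def by simp
  ultimately have "4 * p * 1 \<le> 4 * p * real (4 * d ^ 3)" by (intro mult_left_mono) simp_all
  with p_cond have "p < 1 / 2" by linarith
  interpret subset_local_lemma "{0..<npairs}" events unbalanced support p "4 * d ^ 3"
  proof
    show "finite events" unfolding events_def using finite_Y by simp
    show "support e \<subseteq> {0..<npairs}" for e unfolding support_def by blast
    show "real (card {S. S \<subseteq> {0..<npairs} \<and> unbalanced e S}) \<le> p * 2 ^ card {0..<npairs}"
      if "e \<in> events" for e
      using card_unbalanced_le[OF that] .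
    show "p < 1 / 2" "4 * p * real (4 * d ^ 3) \<le> 1" by fact+
  qed (simp_all add: unbalanced_determined card_dependent_events_le \<open>0 \<le> p\<close>)
  obtain S where "S \<subseteq> {0..<npairs}" and balanced: "\<And>e. e \<in> events \<Longrightarrow> \<not> unbalanced e S"
    using exists_avoiding_all by blast
  moreover have "(y, j) \<in> events" if "y \<in> Y" "j \<in> {1..k}" for y j
    using that unfolding events_def by simp
  ultimately show ?thesis unfolding unbalanced_def by (auto simp: not_less)
qed

lemma exists_good_bipartitions_of_colouring:
  assumes "1 \<le> k" and G_X: "\<And>u v. G u v \<Longrightarrow> u \<in> X \<and> v \<in> X" and G_irrefl: "\<And>u. \<not> G u u"
    and col_proper: "\<And>x x'. G x x' \<Longrightarrow> pair x \<noteq> pair x' \<Longrightarrow> col (pair x) \<noteq> col (pair x')"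
  shows "\<exists>X1 X2 :: nat \<Rightarrow> nat set.
          (\<forall>j\<in>{1..k}. bipartition_of X (X1 j) (X2 j)) \<and>
          (\<forall>u v. G u v \<longrightarrow> (\<exists>j\<in>{1..k}. (u \<in> X1 j \<and> v \<in> X2 j) \<or> (v \<in> X1 j \<and> u \<in> X2 j))) \<and>
          (\<forall>j\<in>{1..k}. d_good (real d / 5) Y E (X1 j) (X2 j))"
proof -
  obtain S where S: "\<And>y j. y \<in> Y \<Longrightarrow> j \<in> {1..k} \<Longrightarrow>
      real d / 5 \<le> card (nbhd E y \<inter> {x \<in> X. side j S x}) \<and>
      real d / 5 \<le> card (nbhd E y \<inter> {x \<in> X. \<not> side j S x})"
    using exists_balanced_sides by blast
  define X1 where "X1 j = {x \<in> X. side j S x}" for j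
  define X2 where "X2 j = {x \<in> X. \<not> side j S x}" for j
  have "\<exists>j \<in> {1..k}. (u \<in> X1 j \<and> v \<in> X2 j) \<or> (v \<in> X1 j \<and> u \<in> X2 j)" if "G u v" for u v
  proof -
    have "u \<in> X" "v \<in> X" "u \<noteq> v" using G_X[OF that] G_irrefl that by auto
    moreover have "col (pair u) = col (pair v) \<Longrightarrow> pair u = pair v" using col_proper that by blast
    ultimately obtain j where "j \<in> {1..k}" "side j S u \<noteq> side j S v"
      using side_separates[of u v S] \<open>1 \<le> k\<close> by blast
    then show ?thesis using \<open>u \<in> X\<close> \<open>v \<in> X\<close> unfolding X1_def X2_def by auto
  qed
  moreover have "bipartition_of X (X1 j) (X2 j)" for j
    unfolding bipartition_of_def X1_def X2_def by auto
  moreover have "d_good (real d / 5) Y E (X1 j) (X2 j)" if "j \<in> {1..k}" for j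
    using card_side_balanced[of j S] S[OF _ that] unfolding d_good_def X1_def X2_def by blast
  ultimately show ?thesis by blast
qed

end

section \<open>The bipartite graph \<open>H\<close>\<close>

lemma powr_two_thirds_le:
  fixes d :: real
  assumes "d \<ge> 1000000"
  shows "d powr (2/3) \<le> d / 100"
proof -
  define a where "a = d powr (1/3)"
  have d0: "d > 0" using assms by simp
  have a3: "a ^ 3 = d" unfolding a_def using d0
    by (simp add: powr_realpow[symmetric] powr_powr)
  have a2: "d powr (2/3) = a ^ 2" unfolding a_def using d0
    by (simp add: powr_realpow[symmetric] powr_powr)
  have a0: "a > 0" unfolding a_def using d0 by simp
  have "100 ^ 3 \<le> a ^ 3" using a3 assms by simp
  then have a100: "100 \<le> a" using a0 power_le_imp_le_base[of 100 2 a] by (simp add: numeral_3_eq_3)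
  have "a ^ 2 * 100 \<le> a ^ 2 * a" using a100 by (simp add: mult_left_mono)
  then show ?thesis using a2 a3 by (simp add: power3_eq_cube power2_eq_square algebra_simps)
qed

lemma nat_ceiling_log2_bounds:
  assumes "1 \<le> \<Delta>"
  shows "\<Delta> \<le> 2 ^ nat \<lceil>log 2 (real \<Delta>)\<rceil>" "nat \<lceil>log 2 (real \<Delta>)\<rceil> \<le> \<Delta>"
proof -
  have "real \<Delta> = 2 powr (log 2 (real \<Delta>))" using assms by simp
  also have "\<dots> \<le> 2 powr (real (nat \<lceil>log 2 (real \<Delta>)\<rceil>))"
    by (rule powr_mono) (simp_all add: real_nat_ceiling_ge)
  finally show "\<Delta> \<le> 2 ^ nat \<lceil>log 2 (real \<Delta>)\<rceil>"
    by (simp add: powr_realpow flip: of_nat_le_iff)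
  have "real \<Delta> < 2 powr (real \<Delta>)" using less_exp[of \<Delta>] by (simp add: powr_realpow)
  then have "log 2 (real \<Delta>) < real \<Delta>" using assms by (simp add: log_less_iff)
  then show "nat \<lceil>log 2 (real \<Delta>)\<rceil> \<le> \<Delta>" by simp
qed

lemma bipartition_count_bounds:
  fixes d \<Delta> :: nat
  assumes "1 \<le> \<Delta>" "\<Delta> \<le> d" "1000000 \<le> d"
  defines "k \<equiv> nat \<lceil>log 2 (real \<Delta>)\<rceil> + 8"
  shows "1 \<le> k" "2 * \<Delta> < 2 ^ (k - 1)" "k \<le> 2 * d"
proof -
  have "\<Delta> \<le> 2 ^ (k - 8)" "k - 8 \<le> \<Delta>" "8 \<le> k"
    using nat_ceiling_log2_bounds[OF assms(1)] unfolding k_def by simp_all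
  moreover have "(2::nat) ^ (k - 1) = 2 ^ (k - 8) * 2 ^ 7"
  proof -
    have "k - 1 = (k - 8) + 7" using \<open>8 \<le> k\<close> by simp
    then show ?thesis by (simp only: power_add)
  qed
  ultimately show "1 \<le> k" "2 * \<Delta> < 2 ^ (k - 1)" "k \<le> 2 * d"
    using assms(1-3) by simp_all
qed

lemma balanced_bipartite_nbhd:
  assumes "balanced_bipartite n X Y E"
  shows "finite X" "finite Y" "\<And>u v. E u v \<Longrightarrow> E v u"
    "\<And>y. y \<in> Y \<Longrightarrow> nbhd E y \<subseteq> X" "\<And>x. x \<in> X \<Longrightarrow> nbhd E x \<subseteq> Y" "X \<union> Y = {1..n}"
proof -
  have XY: "X \<union> Y = {1..n}" "X \<inter> Y = {}"
    and bip: "\<And>u v. E u v \<Longrightarrow> (u \<in> X \<and> v \<in> Y) \<or> (u \<in> Y \<and> v \<in> X)"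
    and sym: "\<And>u v. E u v \<Longrightarrow> E v u"
    using assms unfolding balanced_bipartite_def simple_graph_on_def by blast+
  show "finite X" "finite Y" using XY(1) finite_subset[of _ "{1..n}"] by blast+
  show "E u v \<Longrightarrow> E v u" for u v by (rule sym)
  show "nbhd E y \<subseteq> X" if "y \<in> Y" for y using that bip XY(2) unfolding nbhd_def by blast
  show "nbhd E x \<subseteq> Y" if "x \<in> X" for x using that bip XY(2) unfolding nbhd_def by blast
  show "X \<union> Y = {1..n}" by (rule XY(1))
qed

lemma degree_bounds_near_half:
  fixes d :: nat and c :: real
  assumes "1000000 \<le> d" "real d / 2 - real d powr (2/3) \<le> c" "c \<le> real d / 2 + real d powr (2/3)"
  shows "49 * real d / 100 \<le> c" "c \<le> real d"
  using powr_two_thirds_le[of "real d"] assms by simp_all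

lemma exists_good_bipartitions:
  fixes d n \<Delta> :: nat
  assumes d_large: "1000000 \<le> d" and H: "balanced_bipartite n X Y E"
    and degrees: "\<forall>v\<in>{1..n}. real d / 2 - real d powr (2/3) \<le> real (card (nbhd E v)) \<and>
                    real (card (nbhd E v)) \<le> real d / 2 + real d powr (2/3)"
    and G: "simple_graph_on X G" and degree_G: "\<forall>v\<in>X. card (nbhd G v) \<le> \<Delta>"
    and "1 \<le> \<Delta>" "\<Delta> \<le> d"
  defines "k \<equiv> nat \<lceil>log 2 (real \<Delta>)\<rceil> + 8"
  shows "\<exists>X1 X2 :: nat \<Rightarrow> nat set.
          (\<forall>j\<in>{1..k}. bipartition_of X (X1 j) (X2 j)) \<and>
          (\<forall>u v. G u v \<longrightarrow> (\<exists>j\<in>{1..k}. (u \<in> X1 j \<and> v \<in> X2 j) \<or> (v \<in> X1 j \<and> u \<in> X2 j))) \<and>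
          (\<forall>j\<in>{1..k}. d_good (real d / 5) Y E (X1 j) (X2 j))"
proof -
  note H_facts = balanced_bipartite_nbhd[OF H]
  have G_sym: "\<And>u v. G u v \<Longrightarrow> G v u" and G_X: "\<And>u v. G u v \<Longrightarrow> u \<in> X \<and> v \<in> X"
    and G_irrefl: "\<And>u. \<not> G u u"
    using G unfolding simple_graph_on_def by blast+
  obtain pos where "bij_betw pos X {0..<card X}"
    using ex_bij_betw_finite_nat[OF H_facts(1)] by blast
  then interpret pairing X pos by unfold_locales (rule H_facts(1))
  obtain col where col_le: "\<forall>x \<in> X. col (pair x) \<le> 2 * \<Delta>"
    and col_proper: "\<forall>x x'. G x x' \<and> pair x \<noteq> pair x' \<longrightarrow> col (pair x) \<noteq> col (pair x')"
    using exists_pair_colouring[of G \<Delta>] G_sym G_X degree_G unfolding nbhd_def by blast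
  note k_bounds = bipartition_count_bounds[OF \<open>1 \<le> \<Delta>\<close> \<open>\<Delta> \<le> d\<close> d_large, folded k_def]
  have degree: "49 * real d / 100 \<le> card (nbhd E v) \<and> card (nbhd E v) \<le> real d" if "v \<in> X \<union> Y" for v
    using degree_bounds_near_half[OF d_large] degrees that H_facts(6) by blast
  interpret bipartite_splitting X pos col k Y E d
  proof
    show "col (pair x) < 2 ^ (k - 1)" if "x \<in> X" for x
      using col_le that k_bounds(2) by (meson le_less_trans)
    show "card (nbhd E v) \<le> d" if "v \<in> X \<union> Y" for v
      using degree[OF that] of_nat_le_iff by blast
    show "49 * real d / 100 \<le> card (nbhd E y)" if "y \<in> Y" for y
      using degree that by blast
  qed (simp_all add: H_facts(2-5) degree d_large k_bounds(3))
  show ?thesis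
    by (rule exists_good_bipartitions_of_colouring[where G = G, OF k_bounds(1) G_X G_irrefl])
      (use col_proper in auto)
qed

theorem lemma3p4:
  shows "\<exists>d0::nat. d0 > 0 \<and> (\<forall>d::nat. d \<ge> d0 \<longrightarrow>
    (\<forall>(n::nat) X Y (E :: nat \<Rightarrow> nat \<Rightarrow> bool) (G :: nat \<Rightarrow> nat \<Rightarrow> bool) (\<Delta>::nat).
       n > 0 \<longrightarrow> even n \<longrightarrow> balanced_bipartite n X Y E \<longrightarrow>
       (\<forall>v\<in>{1..n}. real d / 2 - real d powr (2/3) \<le> real (card (nbhd E v)) \<and>
                    real (card (nbhd E v)) \<le> real d / 2 + real d powr (2/3)) \<longrightarrow>
       simple_graph_on X G \<longrightarrow> (\<forall>v\<in>X. card (nbhd G v) \<le> \<Delta>) \<longrightarrow>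
       1 \<le> \<Delta> \<longrightarrow> \<Delta> \<le> d \<longrightarrow>
       (let k = nat \<lceil>log 2 (real \<Delta>)\<rceil> + 8 in
        \<exists>X1 X2 :: nat \<Rightarrow> nat set.
          (\<forall>j\<in>{1..k}. bipartition_of X (X1 j) (X2 j)) \<and>
          (\<forall>u v. G u v \<longrightarrow> (\<exists>j\<in>{1..k}. (u \<in> X1 j \<and> v \<in> X2 j) \<or> (v \<in> X1 j \<and> u \<in> X2 j))) \<and>
          (\<forall>j\<in>{1..k}. d_good (real d / 5) Y E (X1 j) (X2 j)))))"
  unfolding Let_def
  by (intro exI[of _ 1000000] conjI allI impI) (simp, (rule exists_good_bipartitions; assumption))

end
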